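(* Let $\mathcal{Z}_0$ be the signaling scheme output by the Split-and-Match procedure on $\mathcal{D}$. Then for every signaling scheme $\mathcal{Z}'$ for $\mathcal{D}$ and every $m\in(0,1]$, \[4\int_0^m s_{\mathcal{Z}_0}(x)\,dx\ \ge\ \int_0^m s_{\mathcal{Z}'}(x)\,dx.\]
   Context: Values and prior. $0<v_1<\dots<v_n$ are reals, and $v_0:=0$. $\mathcal{D}$ is a distribution on $\{v_1,\dots,v_n\}$ with $f_{\mathcal{D}}(v_i)>0$ and CDF $F_{\mathcal{D}}$. Signals and pricing. A signal is a distribution $S$ on these values, with $G_S(p)=\Pr_{v\sim S}[v\ge p]$. The seller posts $p^*_S$, the smallest $v$ in the support of $S$ maximizing $v\,G_S(v)$. The surplus of value $v$ is $cs_v(S)=\mathbb{1}[v\ge p^*_S](v-p^*_S)$. Signaling schemes. A signaling scheme is $\mathcal{Z}=\{(S_q,\gamma_q)\}_{q\in[Q]}$ with $\gamma_q\ge0$, $\sum\gamma_q=1$ and $\sum_q\gamma_q f_{S_q}=f_{\mathcal{D}}$. Its expected consumer surplus at $v_i$ is $cs_{v_i}(\mathcal{Z})=\sum_q cs_{v_i}(S_q)\gamma_q f_{S_q}(v_i)/f_{\mathcal{D}}(v_i)$. The surplus-mass function $s_{\mathcal{Z}}$ on $(0,1]$ equals $cs_{v_i}(\mathcal{Z})$ on $(F_{\mathcal{D}}(v_{i-1}),F_{\mathcal{D}}(v_i)]$. Special signals. For $a<b$ in $\{v_1,\dots,v_n\}$, the equal-revenue binary signal $S^E_{a,b}$ puts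 mass $1-a/b$ on $a$ and $a/b$ on $b$. A singleton signal on $v_i$ puts mass $1$ on $v_i$. Split-and-Match procedure. 1. Initialize $g_i=t_i=\tfrac12 f_{\mathcal{D}}(v_i)$ for all $i$. 2. Repeat: - let $s$ be the smallest index with $g_s>0$; - let $\ell$ be the smallest index $>s$ with $t_\ell>0$; - if no such pair $(s,\ell)$ exists, stop; - otherwise add the signal $S^E_{v_s,v_\ell}$ with weight $\gamma=\min\{g_s/(1-v_s/v_\ell),\ t_\ell/(v_s/v_\ell)\}$; - set $g_s\leftarrow g_s-\gamma(1-v_s/v_\ell)$ and $t_\ell\leftarrow t_\ell-\gamma v_s/v_\ell$. 3. Finally, for each $i$, the mass of $\mathcal{D}$ at $v_i$ not yet used by the added binary signals is covered by a singleton signal on $v_i$ with weight equal to that remaining mass. The resulting family is $\mathcal{Z}_0$. *)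

theory Defs
  imports "HOL-Analysis.Analysis" "HOL-Library.While_Combinator"
begin

text \<open>Values are v 1 < ... < v n (indices 1..n); a distribution / signal on the
values is a function on indices (nat => real) that is zero outside 1..n.\<close>

type_synonym signal = "nat \<Rightarrow> real"
type_synonym scheme = "(signal \<times> real) list"

definition is_signal :: "nat \<Rightarrow> signal \<Rightarrow> bool" where
  "is_signal n S \<longleftrightarrow> (\<forall>j. 0 \<le> S j) \<and> (\<forall>j. j \<notin> {1..n} \<longrightarrow> S j = 0)
     \<and> (\<Sum>j=1..n. S j) = 1"

definition supp_sig :: "nat \<Rightarrow> signal \<Rightarrow> nat set" where
  "supp_sig n S = {j \<in> {1..n}. S j > 0}"

definition G_sig :: "nat \<Rightarrow> (nat \<Rightarrow> real) \<Rightarrow> signal \<Rightarrow> real \<Rightarrow> real" where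
  "G_sig n v S p = (\<Sum>j\<in>{j\<in>{1..n}. v j \<ge> p}. S j)"

text \<open>Index of the posted price: the smallest support value maximizing revenue
(v strictly increasing, so smallest value = smallest index).\<close>
definition price_idx :: "nat \<Rightarrow> (nat \<Rightarrow> real) \<Rightarrow> signal \<Rightarrow> nat" where
  "price_idx n v S = (LEAST i. i \<in> supp_sig n S \<and>
      (\<forall>j\<in>supp_sig n S. v j * G_sig n v S (v j) \<le> v i * G_sig n v S (v i)))"

definition cs_sig :: "nat \<Rightarrow> (nat \<Rightarrow> real) \<Rightarrow> signal \<Rightarrow> nat \<Rightarrow> real" where
  "cs_sig n v S i = (if v i \<ge> v (price_idx n v S) then v i - v (price_idx n v S) else 0)"

definition is_scheme :: "nat \<Rightarrow> (nat \<Rightarrow> real) \<Rightarrow> scheme \<Rightarrow> bool" where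
  "is_scheme n f Z \<longleftrightarrow> (\<forall>(S,\<gamma>)\<in>set Z. 0 \<le> \<gamma> \<and> is_signal n S)
     \<and> sum_list (map snd Z) = 1
     \<and> (\<forall>i\<in>{1..n}. sum_list (map (\<lambda>(S,\<gamma>). \<gamma> * S i) Z) = f i)"

definition cs_scheme :: "nat \<Rightarrow> (nat \<Rightarrow> real) \<Rightarrow> (nat \<Rightarrow> real) \<Rightarrow> scheme \<Rightarrow> nat \<Rightarrow> real" where
  "cs_scheme n v f Z i = sum_list (map (\<lambda>(S,\<gamma>). cs_sig n v S i * \<gamma> * S i / f i) Z)"

definition cdf :: "(nat \<Rightarrow> real) \<Rightarrow> nat \<Rightarrow> real" where
  "cdf f i = (\<Sum>j=1..i. f j)"

definition surplus_mass :: "nat \<Rightarrow> (nat \<Rightarrow> real) \<Rightarrow> (nat \<Rightarrow> real) \<Rightarrow> scheme \<Rightarrow> real \<Rightarrow> real" where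
  "surplus_mass n v f Z x =
     (\<Sum>i=1..n. if cdf f (i - 1) < x \<and> x \<le> cdf f i then cs_scheme n v f Z i else 0)"

definition eq_rev_sig :: "(nat \<Rightarrow> real) \<Rightarrow> nat \<Rightarrow> nat \<Rightarrow> signal" where
  "eq_rev_sig v a b = (\<lambda>j. if j = a then 1 - v a / v b else if j = b then v a / v b else 0)"

definition singleton_sig :: "nat \<Rightarrow> signal" where
  "singleton_sig i = (\<lambda>j. if j = i then 1 else 0)"

text \<open>Split-and-Match. State: (g, t, list of added binary signals ((s,l), weight)).\<close>
type_synonym sm_state = "(nat \<Rightarrow> real) \<times> (nat \<Rightarrow> real) \<times> ((nat \<times> nat) \<times> real) list"

definition sm_s :: "nat \<Rightarrow> (nat \<Rightarrow> real) \<Rightarrow> nat" where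
  "sm_s n g = (LEAST s. 1 \<le> s \<and> s \<le> n \<and> g s > 0)"

definition sm_l :: "nat \<Rightarrow> nat \<Rightarrow> (nat \<Rightarrow> real) \<Rightarrow> nat" where
  "sm_l n s t = (LEAST l. s < l \<and> l \<le> n \<and> t l > 0)"

definition sm_cont :: "nat \<Rightarrow> sm_state \<Rightarrow> bool" where
  "sm_cont n st = (case st of (g, t, L) \<Rightarrow>
      (\<exists>s. 1 \<le> s \<and> s \<le> n \<and> g s > 0) \<and>
      (\<exists>l. sm_s n g < l \<and> l \<le> n \<and> t l > 0))"

definition sm_step :: "nat \<Rightarrow> (nat \<Rightarrow> real) \<Rightarrow> sm_state \<Rightarrow> sm_state" where
  "sm_step n v st = (case st of (g, t, L) \<Rightarrow>
      let s = sm_s n g; l = sm_l n s t;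
          \<gamma> = min (g s / (1 - v s / v l)) (t l / (v s / v l))
      in (g(s := g s - \<gamma> * (1 - v s / v l)), t(l := t l - \<gamma> * (v s / v l)),
          L @ [((s, l), \<gamma>)]))"

definition split_and_match_binary :: "nat \<Rightarrow> (nat \<Rightarrow> real) \<Rightarrow> (nat \<Rightarrow> real) \<Rightarrow> ((nat \<times> nat) \<times> real) list" where
  "split_and_match_binary n v f =
     (case the (while_option (sm_cont n) (sm_step n v) (\<lambda>i. f i / 2, \<lambda>i. f i / 2, []))
      of (g, t, L) \<Rightarrow> L)"

definition split_and_match :: "nat \<Rightarrow> (nat \<Rightarrow> real) \<Rightarrow> (nat \<Rightarrow> real) \<Rightarrow> scheme" where
  "split_and_match n v f =
     (let L = split_and_match_binary n v f in
        map (\<lambda>((s, l), \<gamma>). (eq_rev_sig v s l, \<gamma>)) L @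
        map (\<lambda>i. (singleton_sig i,
                   f i - sum_list (map (\<lambda>((s, l), \<gamma>). \<gamma> * eq_rev_sig v s l i) L))) [1..<n+1])"

end

theory Submission
  imports Defs
begin

text \<open>
  The seller's price in a signal is revenue-optimal, so the buyers with the k lowest values pay
  at least what any single price v i0 would extract from them. Summing over the signals of an
  arbitrary scheme, the surplus of the k lowest values is at most
  \<Sum>j<i0. f j v j + \<Sum>i0<j\<le>k. f j (v j - v i0), for every cutoff i0.

  In the Split-and-Match scheme only the equal-revenue pairs create surplus: a pair (s,l) of
  weight \<gamma> gives l the surplus \<gamma> (v s / v l) (v l - v s). This is v s times the mass the
  pair draws from s, and at least (v l - v i0) times the mass it draws from l when s \<le> i0.
  When the procedure stops there is a cutoff i0 below which the split halves, and between i0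
  and k the matched halves, are used up by pairs ending inside the prefix. Each half being
  f j / 2, both sums are at most twice the prefix surplus of Split-and-Match, which gives the
  factor 4 on every prefix. Finally, the integral of a surplus-mass function up to m
  interpolates linearly between two consecutive prefix surpluses.
\<close>

lemma sum_sum_list_swap:
  "(\<Sum>i\<in>A. sum_list (map (h i) L)) = sum_list (map (\<lambda>p. \<Sum>i\<in>A. h i p) L)"
  by (induction L) (simp_all add: sum.distrib)

lemma sum_list_weighted_linear:
  fixes w :: "nat \<Rightarrow> real" and Z :: scheme
  shows "sum_list (map (\<lambda>(S,\<gamma>). \<gamma> * ((\<Sum>j\<in>A. S j * w j) - c * (\<Sum>j\<in>B. S j))) Z)
   = (\<Sum>j\<in>A. w j * sum_list (map (\<lambda>(S,\<gamma>). \<gamma> * S j) Z))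
     - c * (\<Sum>j\<in>B. sum_list (map (\<lambda>(S,\<gamma>). \<gamma> * S j) Z))"
  by (induction Z)
    (auto simp: sum.distrib distrib_left sum_distrib_left right_diff_distrib mult_ac)

lemma sum_minus_tail_split:
  fixes h :: "nat \<Rightarrow> real"
  assumes "1 \<le> i0" "i0 \<le> Suc k"
  shows "(\<Sum>j=1..k. h j * w j) - w i0 * (\<Sum>j=i0..k. h j)
      = (\<Sum>j\<in>{1..<i0}. h j * w j) + (\<Sum>j\<in>{i0<..k}. h j * (w j - w i0))"
proof -
  have u: "{1..k} = {1..<i0} \<union> {i0..k}" using assms by auto
  have "(\<Sum>j=1..k. h j * w j) = (\<Sum>j\<in>{1..<i0}. h j * w j) + (\<Sum>j=i0..k. h j * w j)"
    unfolding u by (rule sum.union_disjoint) auto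
  moreover have "(\<Sum>j=i0..k. h j * w j) - w i0 * (\<Sum>j=i0..k. h j) = (\<Sum>j=i0..k. h j * (w j - w i0))"
    by (simp add: sum_distrib_left sum_subtractf algebra_simps)
  moreover have "(\<Sum>j=i0..k. h j * (w j - w i0)) = (\<Sum>j\<in>{i0<..k}. h j * (w j - w i0))"
    by (rule sum.mono_neutral_right) auto
  ultimately show ?thesis by simp
qed

lemma has_integral_Ioc_const:
  fixes a b m c :: real
  assumes "0 \<le> a" "a \<le> b" "0 \<le> m"
  shows "((\<lambda>x. if a < x \<and> x \<le> b then c else 0) has_integral (c * (min m b - min m a))) {0..m}"
proof -
  define a' where "a' = min m a"
  define b' where "b' = min m b"
  have ab: "0 \<le> a'" "a' \<le> b'" "b' \<le> m" using assms by (auto simp: a'_def b'_def)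
  have "((\<lambda>x. c) has_integral ((b' - a') *\<^sub>R c)) {a'..b'}"
    using has_integral_const_real[of c a' b'] ab by simp
  then have "((\<lambda>x. if x \<in> cbox a' b' then c else 0) has_integral ((b' - a') *\<^sub>R c)) (cbox 0 m)"
    using ab by (intro has_integral_restrict_closed_subinterval) auto
  then have h: "((\<lambda>x. if x \<in> {a'..b'} then c else 0) has_integral (c * (b' - a'))) {0..m}"
    by (simp add: mult.commute)
  show ?thesis unfolding a'_def[symmetric] b'_def[symmetric]
  proof (rule has_integral_spike_finite[OF _ _ h, of "{a'}"])
    fix x assume "x \<in> {0..m} - {a'}"
    then show "(if a < x \<and> x \<le> b then c else 0) = (if x \<in> {a'..b'} then c else 0)"
      using assms by (auto simp: a'_def b'_def min_def)
  qed auto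
qed

lemma cdf_step: "1 \<le> i \<Longrightarrow> cdf f i = cdf f (i - 1) + f i"
  by (cases i) (simp_all add: cdf_def)

lemma signal_nonneg: "is_signal n S \<Longrightarrow> 0 \<le> S j"
  by (simp add: is_signal_def)

lemma supp_sig_nonempty:
  assumes S: "is_signal n S" shows "supp_sig n S \<noteq> {}"
proof
  assume empty: "supp_sig n S = {}"
  have "S j = 0" if "j \<in> {1..n}" for j
  proof -
    have "0 \<le> S j" using S by (rule signal_nonneg)
    moreover have "\<not> 0 < S j" using empty that by (simp add: supp_sig_def)
    ultimately show ?thesis by simp
  qed
  then have "(\<Sum>j=1..n. S j) = 0" by simp
  then show False using S by (simp add: is_signal_def)
qed

section \<open>Revenue-optimal pricing of a single signal\<close>

locale increasing_values =
  fixes n :: nat and v :: "nat \<Rightarrow> real"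
  assumes v_pos: "0 < v 1" and v_mono: "strict_mono_on {1..n} v"
begin

lemmas v_less_iff = strict_mono_on_less[OF v_mono]
lemmas v_le_iff = strict_mono_on_less_eq[OF v_mono]

lemma v_gt_0:
  assumes "i \<in> {1..n}" shows "0 < v i"
proof -
  have "v 1 \<le> v i" using assms v_le_iff[of 1 i] by simp
  then show ?thesis using v_pos by simp
qed

lemma G_sig_value:
  assumes "i \<in> {1..n}" shows "G_sig n v S (v i) = (\<Sum>j=i..n. S j)"
proof -
  have "{j\<in>{1..n}. v i \<le> v j} = {i..n}"
    using assms v_le_iff[OF assms] by auto
  then show ?thesis unfolding G_sig_def by simp
qed

lemma price_idx_revenue_max:
  assumes S: "is_signal n S"
  shows "price_idx n v S \<in> supp_sig n S"
    and "\<And>j. j \<in> supp_sig n S \<Longrightarrow>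
           v j * G_sig n v S (v j) \<le> v (price_idx n v S) * G_sig n v S (v (price_idx n v S))"
proof -
  define rev where "rev j = v j * G_sig n v S (v j)" for j
  have fin: "finite (supp_sig n S)" unfolding supp_sig_def by auto
  have "Max (rev ` supp_sig n S) \<in> rev ` supp_sig n S"
    using fin supp_sig_nonempty[OF S] by simp
  then obtain i where i: "i \<in> supp_sig n S" "rev i = Max (rev ` supp_sig n S)"
    by force
  then have "\<forall>j\<in>supp_sig n S. rev j \<le> rev i" using fin by simp
  with i(1) have "price_idx n v S \<in> supp_sig n S \<and> (\<forall>j\<in>supp_sig n S. rev j \<le> rev (price_idx n v S))"
    unfolding price_idx_def rev_def by (rule LeastI[OF conjI])
  then show "price_idx n v S \<in> supp_sig n S"
    and "\<And>j. j \<in> supp_sig n S \<Longrightarrow>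
           v j * G_sig n v S (v j) \<le> v (price_idx n v S) * G_sig n v S (v (price_idx n v S))"
    by (auto simp: rev_def)
qed

lemma price_idx_range:
  assumes "is_signal n S" shows "price_idx n v S \<in> {1..n}"
  using price_idx_revenue_max(1)[OF assms] by (simp add: supp_sig_def)

lemma cs_sig_eq:
  assumes "is_signal n S" "j \<in> {1..n}"
  shows "cs_sig n v S j = (if price_idx n v S \<le> j then v j - v (price_idx n v S) else 0)"
  using v_le_iff[OF price_idx_range[OF assms(1)] assms(2)] by (simp add: cs_sig_def)

text \<open>Any index i, used as a price, earns at most the optimal revenue: pass to the first
  support point at or above i, which sells to the same buyers at a higher price.\<close>
lemma tail_revenue_le_price:
  assumes S: "is_signal n S" and i: "i \<in> {1..n}"
  shows "v i * (\<Sum>j=i..n. S j) \<le> v (price_idx n v S) * (\<Sum>j=price_idx n v S..n. S j)"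
proof (cases "\<exists>j. j \<in> {i..n} \<and> 0 < S j")
  case False
  then have "(\<Sum>j=i..n. S j) = 0"
    using signal_nonneg[OF S] by (intro sum.neutral) (metis less_eq_real_def)
  moreover have "0 \<le> v (price_idx n v S) * (\<Sum>j=price_idx n v S..n. S j)"
    using v_gt_0[OF price_idx_range[OF S]] signal_nonneg[OF S] by (simp add: sum_nonneg)
  ultimately show ?thesis by simp
next
  case True
  define i' where "i' = (LEAST j. j \<in> {i..n} \<and> 0 < S j)"
  have i': "i' \<in> {i..n}" "0 < S i'"
    using LeastI_ex[OF True] unfolding i'_def by auto
  have "S j = 0" if "j \<in> {i..n} - {i'..n}" for j
    using that not_less_Least[of j "\<lambda>j. j \<in> {i..n} \<and> 0 < S j"] signal_nonneg[OF S, of j]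
    unfolding i'_def[symmetric] by auto
  then have tail: "(\<Sum>j=i..n. S j) = (\<Sum>j=i'..n. S j)"
    using i' by (intro sum.mono_neutral_right) auto
  have i'_supp: "i' \<in> supp_sig n S" using i i' by (simp add: supp_sig_def)
  have "v i * (\<Sum>j=i'..n. S j) \<le> v i' * (\<Sum>j=i'..n. S j)"
    using i i' v_le_iff[of i i'] signal_nonneg[OF S]
    by (intro mult_right_mono sum_nonneg) auto
  also have "\<dots> \<le> v (price_idx n v S) * (\<Sum>j=price_idx n v S..n. S j)"
    using price_idx_revenue_max(2)[OF S i'_supp] i i'
      G_sig_value[of i'] G_sig_value[OF price_idx_range[OF S]] by simp
  finally show ?thesis using tail by simp
qed

lemma signal_prefix_payment:
  assumes S: "is_signal n S" and k: "k \<le> n"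
  shows "(\<Sum>j=1..k. S j * v j) - (\<Sum>j=1..k. S j * cs_sig n v S j)
       = (\<Sum>j=1..k. S j * min (v j) (v (price_idx n v S)))"
proof -
  have "S j * v j - S j * cs_sig n v S j = S j * min (v j) (v (price_idx n v S))"
    if "j \<in> {1..k}" for j
    using that k cs_sig_eq[OF S, of j] v_le_iff[OF price_idx_range[OF S], of j]
    by (auto simp: min_def algebra_simps)
  then show ?thesis by (simp add: sum_subtractf[symmetric])
qed

lemma prefix_revenue_le_price:
  assumes S: "is_signal n S" and k: "k \<le> n" and i0: "i0 \<in> {1..k}"
    and below: "price_idx n v S \<le> i0"
  shows "v i0 * (\<Sum>j=i0..k. S j) \<le> v (price_idx n v S) * (\<Sum>j=price_idx n v S..k. S j)"
proof -
  define p where "p = price_idx n v S"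
  have p: "p \<in> {1..n}" unfolding p_def using price_idx_range[OF S] .
  define T where "T = (\<Sum>j=Suc k..n. S j)"
  have split: "(\<Sum>j=a..n. S j) = (\<Sum>j=a..k. S j) + T" if "a \<le> Suc k" for a
    using that k sum.ub_add_nat[of a k S "n - k"] by (simp add: T_def)
  have "v p * T \<le> v i0 * T"
    using v_le_iff[OF p] i0 k below signal_nonneg[OF S]
    by (intro mult_right_mono) (auto simp: p_def T_def sum_nonneg)
  moreover have "v i0 * (\<Sum>j=i0..n. S j) \<le> v p * (\<Sum>j=p..n. S j)"
    using tail_revenue_le_price[OF S] i0 k by (auto simp: p_def)
  ultimately show ?thesis
    using split[of i0] split[of p] i0 below by (simp add: p_def algebra_simps)
qed

lemma signal_prefix_payment_ge:
  assumes S: "is_signal n S" and k: "k \<le> n" and i0: "1 \<le> i0" "i0 \<le> Suc k"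
  shows "v i0 * (\<Sum>j=i0..k. S j) \<le> (\<Sum>j=1..k. S j * min (v j) (v (price_idx n v S)))"
proof -
  define p where "p = price_idx n v S"
  have p: "p \<in> {1..n}" unfolding p_def using price_idx_range[OF S] .
  have nonneg: "0 \<le> S j * min (v j) (v p)" if "j \<in> {1..k}" for j
    using that k p v_gt_0 signal_nonneg[OF S] by (simp add: less_imp_le)
  consider "i0 = Suc k" | "i0 \<le> k" "i0 \<le> p" | "i0 \<le> k" "p < i0" using i0 by linarith
  then show ?thesis
  proof cases
    case 1
    then show ?thesis using nonneg by (simp add: p_def sum_nonneg del: atLeastAtMost_iff)
  next
    case 2
    have "v i0 * (\<Sum>j=i0..k. S j) = (\<Sum>j=i0..k. S j * v i0)"
      by (simp add: sum_distrib_left mult.commute)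
    also have "\<dots> \<le> (\<Sum>j=i0..k. S j * min (v j) (v p))"
      using 2 i0 k p v_le_iff signal_nonneg[OF S]
      by (intro sum_mono mult_left_mono) auto
    also have "\<dots> \<le> (\<Sum>j=1..k. S j * min (v j) (v p))"
      using nonneg i0 by (intro sum_mono2) auto
    finally show ?thesis by (simp add: p_def)
  next
    case 3
    have "v i0 * (\<Sum>j=i0..k. S j) \<le> v p * (\<Sum>j=p..k. S j)"
      using prefix_revenue_le_price[OF S k] 3 i0 by (simp add: p_def)
    also have "\<dots> = (\<Sum>j=p..k. S j * min (v j) (v p))"
    proof -
      have "min (v j) (v p) = v p" if "j \<in> {p..k}" for j
        using that p k v_le_iff[OF p, of j] by auto
      then show ?thesis by (simp add: sum_distrib_left mult.commute)
    qed
    also have "\<dots> \<le> (\<Sum>j=1..k. S j * min (v j) (v p))"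
      using nonneg p by (intro sum_mono2) auto
    finally show ?thesis by (simp add: p_def)
  qed
qed

lemma signal_prefix_surplus_le:
  assumes S: "is_signal n S" and k: "k \<le> n" and i0: "1 \<le> i0" "i0 \<le> Suc k"
  shows "(\<Sum>j=1..k. S j * cs_sig n v S j) \<le> (\<Sum>j=1..k. S j * v j) - v i0 * (\<Sum>j=i0..k. S j)"
  using signal_prefix_payment[OF S k] signal_prefix_payment_ge[OF S k i0] by simp

lemma price_idx_eq_rev_sig:
  assumes sl: "1 \<le> s" "s < l" "l \<le> n"
  shows "price_idx n v (eq_rev_sig v s l) = s"
proof -
  define S where "S = eq_rev_sig v s l"
  define b where "b = v s / v l"
  have sn: "s \<in> {1..n}" and ln: "l \<in> {1..n}" using sl by auto
  have vsl: "0 < v s" "v s < v l" using v_gt_0[OF sn] v_less_iff[OF sn ln] sl by auto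
  have b: "0 < b" "b < 1" using vsl by (auto simp: b_def)
  have S: "S j = (if j = s then 1 - b else 0) + (if j = l then b else 0)" for j
    using sl by (simp add: S_def eq_rev_sig_def b_def)
  have supp: "supp_sig n S = {s, l}"
    using sn ln b sl by (auto simp: supp_sig_def S)
  have "G_sig n v S (v s) = 1" "G_sig n v S (v l) = b"
    using G_sig_value[OF sn, of S] G_sig_value[OF ln, of S] sl by (simp_all add: S sum.distrib)
  moreover have "v l * b = v s" using vsl by (simp add: b_def)
  ultimately show ?thesis unfolding S_def[symmetric] price_idx_def
    by (intro Least_equality) (auto simp: supp sl(2) less_imp_le)
qed

lemma eq_rev_sig_prefix_surplus:
  assumes sl: "1 \<le> s" "s < l" "l \<le> n"
  shows "(\<Sum>i=1..k. \<gamma> * (eq_rev_sig v s l i * cs_sig n v (eq_rev_sig v s l) i))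
     = (if l \<le> k then \<gamma> * (v s / v l) * (v l - v s) else 0)"
proof -
  have "\<gamma> * (eq_rev_sig v s l i * cs_sig n v (eq_rev_sig v s l) i)
      = (if i = l then \<gamma> * (v s / v l) * (v l - v s) else 0)" for i
    using sl v_less_iff[of s l] unfolding cs_sig_def price_idx_eq_rev_sig[OF sl]
    by (auto simp: eq_rev_sig_def)
  then show ?thesis using sl by simp
qed

lemma singleton_sig_prefix_surplus:
  assumes "i0 \<in> {1..n}"
  shows "(\<Sum>i=1..k. \<gamma> * (singleton_sig i0 i * cs_sig n v (singleton_sig i0) i)) = 0"
proof -
  have "supp_sig n (singleton_sig i0) = {i0}"
    using assms by (auto simp: supp_sig_def singleton_sig_def)
  then have price: "price_idx n v (singleton_sig i0) = i0"
    unfolding price_idx_def by (intro Least_equality) auto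
  show ?thesis unfolding cs_sig_def price by (intro sum.neutral) (simp add: singleton_sig_def)
qed

end

section \<open>Prefix surpluses\<close>

definition prefix_surplus :: "nat \<Rightarrow> (nat \<Rightarrow> real) \<Rightarrow> (nat \<Rightarrow> real) \<Rightarrow> scheme \<Rightarrow> nat \<Rightarrow> real" where
  "prefix_surplus n v f Z k = (\<Sum>i=1..k. f i * cs_scheme n v f Z i)"

definition binary_prefix_surplus :: "(nat \<Rightarrow> real) \<Rightarrow> nat \<Rightarrow> ((nat \<times> nat) \<times> real) list \<Rightarrow> real" where
  "binary_prefix_surplus v k L =
     sum_list (map (\<lambda>((s,l),\<gamma>). if l \<le> k then \<gamma> * (v s / v l) * (v l - v s) else 0) L)"

definition valid_pairs :: "nat \<Rightarrow> ((nat \<times> nat) \<times> real) list \<Rightarrow> bool" where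
  "valid_pairs n L \<longleftrightarrow> (\<forall>s l \<gamma>. ((s,l),\<gamma>) \<in> set L \<longrightarrow> 1 \<le> s \<and> s < l \<and> l \<le> n \<and> 0 \<le> \<gamma>)"

lemma valid_pairsD:
  assumes "valid_pairs n L" "((s,l),\<gamma>) \<in> set L"
  shows "s \<in> {1..n}" "l \<in> {1..n}" "s < l" "0 \<le> \<gamma>"
proof -
  have "1 \<le> s \<and> s < l \<and> l \<le> n \<and> 0 \<le> \<gamma>" using assms unfolding valid_pairs_def by blast
  then show "s \<in> {1..n}" "l \<in> {1..n}" "s < l" "0 \<le> \<gamma>" by auto
qed

locale values_prior = increasing_values +
  fixes f :: "nat \<Rightarrow> real"
  assumes f_pos: "\<And>i. i \<in> {1..n} \<Longrightarrow> 0 < f i"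
begin

lemma prefix_surplus_sum_list:
  assumes "k \<le> n"
  shows "prefix_surplus n v f Z k
       = sum_list (map (\<lambda>(S,\<gamma>). \<Sum>i=1..k. \<gamma> * (S i * cs_sig n v S i)) Z)"
proof -
  have "f i * cs_scheme n v f Z i = sum_list (map (\<lambda>(S,\<gamma>). \<gamma> * (S i * cs_sig n v S i)) Z)"
    if "i \<in> {1..k}" for i
  proof -
    have "f i \<noteq> 0" using f_pos[of i] that assms by auto
    then show ?thesis unfolding cs_scheme_def
      by (induction Z) (auto simp: distrib_left field_simps)
  qed
  then show ?thesis
    unfolding prefix_surplus_def by (simp add: sum_sum_list_swap split_def)
qed

lemma scheme_prefix_surplus_le:
  assumes Z: "is_scheme n f Z" and k: "k \<le> n" and i0: "1 \<le> i0" "i0 \<le> Suc k"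
  shows "prefix_surplus n v f Z k \<le> (\<Sum>j=1..k. f j * v j) - v i0 * (\<Sum>j=i0..k. f j)"
proof -
  have marginal: "sum_list (map (\<lambda>(S,\<gamma>). \<gamma> * S j) Z) = f j" if "j \<in> {1..k}" for j
    using Z that k unfolding is_scheme_def by auto
  have "prefix_surplus n v f Z k
      \<le> sum_list (map (\<lambda>(S,\<gamma>). \<gamma> * ((\<Sum>j\<in>{1..k}. S j * v j) - v i0 * (\<Sum>j\<in>{i0..k}. S j))) Z)"
    unfolding prefix_surplus_sum_list[OF k]
  proof (rule sum_list_mono, clarify)
    fix S \<gamma> assume "(S, \<gamma>) \<in> set Z"
    then have S: "is_signal n S" and "0 \<le> \<gamma>" using Z unfolding is_scheme_def by auto
    then show "(\<Sum>i=1..k. \<gamma> * (S i * cs_sig n v S i))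
        \<le> \<gamma> * ((\<Sum>j\<in>{1..k}. S j * v j) - v i0 * (\<Sum>j\<in>{i0..k}. S j))"
      using signal_prefix_surplus_le[OF S k i0]
      by (simp add: sum_distrib_left[symmetric] mult_left_mono)
  qed
  also have "\<dots> = (\<Sum>j=1..k. f j * v j) - v i0 * (\<Sum>j=i0..k. f j)"
    unfolding sum_list_weighted_linear using marginal i0 by (simp add: mult.commute)
  finally show ?thesis .
qed

lemma split_and_match_prefix_surplus:
  assumes valid: "valid_pairs n (split_and_match_binary n v f)" and k: "k \<le> n"
  shows "prefix_surplus n v f (split_and_match n v f) k
       = binary_prefix_surplus v k (split_and_match_binary n v f)"
proof -
  define L where "L = split_and_match_binary n v f"
  define h where "h = (\<lambda>(S,\<gamma>). \<Sum>i=1..k. \<gamma> * (S i * cs_sig n v S i))"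
  have binary: "map (h \<circ> (\<lambda>((s,l),\<gamma>). (eq_rev_sig v s l, \<gamma>))) L
      = map (\<lambda>((s,l),\<gamma>). if l \<le> k then \<gamma> * (v s / v l) * (v l - v s) else 0) L"
  proof (rule map_cong[OF refl], clarify)
    fix s l \<gamma> assume "((s,l),\<gamma>) \<in> set L"
    then have "1 \<le> s" "s < l" "l \<le> n" using valid by (auto simp: valid_pairs_def L_def)
    from eq_rev_sig_prefix_surplus[OF this, where k=k and \<gamma>=\<gamma>]
    show "(h \<circ> (\<lambda>((s,l),\<gamma>). (eq_rev_sig v s l, \<gamma>))) ((s,l),\<gamma>)
        = (if l \<le> k then \<gamma> * (v s / v l) * (v l - v s) else 0)"
      by (simp add: h_def)
  qed
  have singletons: "map (h \<circ> (\<lambda>i. (singleton_sig i, c i))) [1..<n+1] = map (\<lambda>i. 0) [1..<n+1]"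
    for c :: "nat \<Rightarrow> real"
  proof (rule map_cong[OF refl])
    fix i assume "i \<in> set [1..<n+1]"
    then have "i \<in> {1..n}" by auto
    from singleton_sig_prefix_surplus[OF this, where k=k and \<gamma>="c i"]
    show "(h \<circ> (\<lambda>i. (singleton_sig i, c i))) i = 0" by (simp add: h_def)
  qed
  show ?thesis
    unfolding prefix_surplus_sum_list[OF k] h_def[symmetric] split_and_match_def Let_def
      L_def[symmetric] map_append sum_list_append map_map binary singletons
    by (simp add: binary_prefix_surplus_def)
qed

end

section \<open>The Split-and-Match scheme\<close>

text \<open>A recorded pair ((s,l),\<gamma>) is the source s and target l of \<gamma> copies of the
  equal-revenue signal; it draws from the split budget g at s and from the match budget t at l.\<close>

definition source_use :: "(nat \<Rightarrow> real) \<Rightarrow> ((nat \<times> nat) \<times> real) list \<Rightarrow> nat \<Rightarrow> real" where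
  "source_use v L i = sum_list (map (\<lambda>((s,l),\<gamma>). if s = i then \<gamma> * (1 - v s / v l) else 0) L)"

definition source_use_upto ::
    "(nat \<Rightarrow> real) \<Rightarrow> nat \<Rightarrow> ((nat \<times> nat) \<times> real) list \<Rightarrow> nat \<Rightarrow> real" where
  "source_use_upto v k L i =
     sum_list (map (\<lambda>((s,l),\<gamma>). if s = i \<and> l \<le> k then \<gamma> * (1 - v s / v l) else 0) L)"

definition target_use :: "(nat \<Rightarrow> real) \<Rightarrow> ((nat \<times> nat) \<times> real) list \<Rightarrow> nat \<Rightarrow> real" where
  "target_use v L i = sum_list (map (\<lambda>((s,l),\<gamma>). if l = i then \<gamma> * (v s / v l) else 0) L)"

definition sources_exhausted_below :: "(nat \<Rightarrow> real) \<Rightarrow> ((nat \<times> nat) \<times> real) list \<Rightarrow> bool" where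
  "sources_exhausted_below g L \<longleftrightarrow>
     (\<forall>s l \<gamma> i. ((s,l),\<gamma>) \<in> set L \<longrightarrow> 1 \<le> i \<longrightarrow> i < s \<longrightarrow> g i = 0)"

definition targets_exhausted_between :: "(nat \<Rightarrow> real) \<Rightarrow> ((nat \<times> nat) \<times> real) list \<Rightarrow> bool" where
  "targets_exhausted_between t L \<longleftrightarrow>
     (\<forall>s l \<gamma> j. ((s,l),\<gamma>) \<in> set L \<longrightarrow> s < j \<longrightarrow> j < l \<longrightarrow> t j = 0)"

definition pairs_monotone :: "((nat \<times> nat) \<times> real) list \<Rightarrow> bool" where
  "pairs_monotone L \<longleftrightarrow>
     (\<forall>s1 l1 \<gamma>1 s2 l2 \<gamma>2. ((s1,l1),\<gamma>1) \<in> set L \<longrightarrow> ((s2,l2),\<gamma>2) \<in> set L \<longrightarrow> s1 < s2 \<longrightarrow> l1 \<le> l2)"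

fun sm_inv :: "nat \<Rightarrow> (nat \<Rightarrow> real) \<Rightarrow> (nat \<Rightarrow> real) \<Rightarrow> sm_state \<Rightarrow> bool" where
  "sm_inv n v f (g, t, L) \<longleftrightarrow>
     (\<forall>i\<in>{1..n}. 0 \<le> g i \<and> 0 \<le> t i) \<and>
     (\<forall>i. g i = f i / 2 - source_use v L i) \<and> (\<forall>i. t i = f i / 2 - target_use v L i) \<and>
     valid_pairs n L \<and> sources_exhausted_below g L \<and> targets_exhausted_between t L \<and>
     pairs_monotone L"

fun sm_measure :: "nat \<Rightarrow> sm_state \<Rightarrow> nat" where
  "sm_measure n (g, t, L) = card {i\<in>{1..n}. 0 < g i} + card {i\<in>{1..n}. 0 < t i}"

lemma sm_s_least:
  assumes nonneg: "\<forall>i\<in>{1..n}. 0 \<le> g i" and ex: "\<exists>s. 1 \<le> s \<and> s \<le> n \<and> 0 < g s"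
  shows "sm_s n g \<in> {1..n}" "0 < g (sm_s n g)" "\<And>i. 1 \<le> i \<Longrightarrow> i < sm_s n g \<Longrightarrow> g i = 0"
proof -
  show "sm_s n g \<in> {1..n}" "0 < g (sm_s n g)"
    using LeastI_ex[OF ex] unfolding sm_s_def by auto
  fix i assume i: "1 \<le> i" "i < sm_s n g"
  then have "\<not> (1 \<le> i \<and> i \<le> n \<and> 0 < g i)"
    unfolding sm_s_def using not_less_Least by blast
  then show "g i = 0" using i nonneg \<open>sm_s n g \<in> {1..n}\<close> by force
qed

lemma sm_l_least:
  assumes nonneg: "\<forall>i\<in>{1..n}. 0 \<le> t i" and ex: "\<exists>l. s < l \<and> l \<le> n \<and> 0 < t l"
  shows "s < sm_l n s t" "sm_l n s t \<le> n" "0 < t (sm_l n s t)"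
    and "\<And>j. s < j \<Longrightarrow> j < sm_l n s t \<Longrightarrow> t j = 0"
proof -
  show "s < sm_l n s t" "sm_l n s t \<le> n" "0 < t (sm_l n s t)"
    using LeastI_ex[OF ex] unfolding sm_l_def by auto
  fix j assume j: "s < j" "j < sm_l n s t"
  then have "\<not> (s < j \<and> j \<le> n \<and> 0 < t j)"
    unfolding sm_l_def using not_less_Least by blast
  moreover have "j \<in> {1..n}" using j \<open>sm_l n s t \<le> n\<close> by auto
  ultimately have "0 \<le> t j" "\<not> 0 < t j" using j nonneg by auto
  then show "t j = 0" by simp
qed

lemma sources_exhausted_below_snoc:
  assumes "sources_exhausted_below g L" "0 < g s" "\<And>i. 1 \<le> i \<Longrightarrow> i < s \<Longrightarrow> g i = 0"
  shows "sources_exhausted_below (g(s := x)) (L @ [((s,l),\<gamma>)])"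
  using assms unfolding sources_exhausted_below_def by (auto split: if_splits) (metis less_irrefl)

lemma targets_exhausted_between_snoc:
  assumes "targets_exhausted_between t L" "0 < t l" "\<And>j. s < j \<Longrightarrow> j < l \<Longrightarrow> t j = 0"
  shows "targets_exhausted_between (t(l := y)) (L @ [((s,l),\<gamma>)])"
  using assms unfolding targets_exhausted_between_def by (auto split: if_splits) (metis less_irrefl)

text \<open>A new pair cannot precede an old one: its source is still unused, so every old
  source lies below it, and its target is still unused, so no old pair jumps over it.\<close>
lemma pairs_monotone_snoc:
  assumes mono: "pairs_monotone L" and below: "sources_exhausted_below g L"
    and between: "targets_exhausted_between t L"
    and s: "1 \<le> s" "0 < g s" and l: "s < l" "0 < t l"
  shows "pairs_monotone (L @ [((s,l),\<gamma>)])"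
proof -
  have "l1 \<le> l" if "((s1,l1),\<gamma>1) \<in> set L" "s1 < s" for s1 l1 \<gamma>1
    using between that l unfolding targets_exhausted_between_def
    by (metis not_le order.strict_trans less_irrefl)
  moreover have "\<not> s < s2" if "((s2,l2),\<gamma>2) \<in> set L" for s2 l2 \<gamma>2
    using below that s unfolding sources_exhausted_below_def by force
  ultimately show ?thesis using mono unfolding pairs_monotone_def by auto
qed

lemma card_positive_update:
  fixes g :: "nat \<Rightarrow> real"
  assumes "0 \<le> a"
  shows "card {i\<in>{1..n}. 0 < (g(s := g s - a)) i} \<le> card {i\<in>{1..n}. 0 < g i}"
    and "s \<in> {1..n} \<Longrightarrow> 0 < g s \<Longrightarrow> a = g s \<Longrightarrow>
         card {i\<in>{1..n}. 0 < (g(s := g s - a)) i} < card {i\<in>{1..n}. 0 < g i}"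
proof -
  have sub: "{i\<in>{1..n}. 0 < (g(s := g s - a)) i} \<subseteq> {i\<in>{1..n}. 0 < g i}"
    using assms by auto
  then show "card {i\<in>{1..n}. 0 < (g(s := g s - a)) i} \<le> card {i\<in>{1..n}. 0 < g i}"
    by (intro card_mono) auto
  assume "s \<in> {1..n}" "0 < g s" "a = g s"
  then have "{i\<in>{1..n}. 0 < (g(s := g s - a)) i} \<subset> {i\<in>{1..n}. 0 < g i}"
    using sub by auto
  then show "card {i\<in>{1..n}. 0 < (g(s := g s - a)) i} < card {i\<in>{1..n}. 0 < g i}"
    by (intro psubset_card_mono) auto
qed

lemma source_use_upto_eq:
  assumes "\<And>l \<gamma>. ((j,l),\<gamma>) \<in> set L \<Longrightarrow> l \<le> k"
  shows "source_use_upto v k L j = source_use v L j"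
  unfolding source_use_upto_def source_use_def
  by (rule arg_cong[where f = sum_list], rule map_cong[OF refl]) (auto simp: assms)

definition sm_cutoff :: "nat \<Rightarrow> nat \<Rightarrow> (nat \<Rightarrow> real) \<Rightarrow> ((nat \<times> nat) \<times> real) list \<Rightarrow> nat" where
  "sm_cutoff n k g L =
     Min (insert (Suc k) ({s. \<exists>l \<gamma>. ((s,l),\<gamma>) \<in> set L \<and> k < l} \<union> {j\<in>{1..n}. 0 < g j}))"

lemma sm_cutoff_bounds:
  assumes valid: "valid_pairs n L"
  shows "1 \<le> sm_cutoff n k g L" "sm_cutoff n k g L \<le> Suc k"
    and "\<And>s l \<gamma>. ((s,l),\<gamma>) \<in> set L \<Longrightarrow> k < l \<Longrightarrow> sm_cutoff n k g L \<le> s"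
    and "\<And>j. j \<in> {1..n} \<Longrightarrow> 0 < g j \<Longrightarrow> sm_cutoff n k g L \<le> j"
proof -
  define C where "C = insert (Suc k) ({s. \<exists>l \<gamma>. ((s,l),\<gamma>) \<in> set L \<and> k < l} \<union> {j\<in>{1..n}. 0 < g j})"
  have cutoff: "sm_cutoff n k g L = Min C" by (simp add: sm_cutoff_def C_def)
  have "{s. \<exists>l \<gamma>. ((s,l),\<gamma>) \<in> set L \<and> k < l} \<subseteq> {1..n}"
    using valid_pairsD(1)[OF valid] by blast
  then have fin: "finite C" unfolding C_def by (auto intro: finite_subset)
  have "1 \<le> c" if "c \<in> C" for c
    using that valid_pairsD(1)[OF valid] by (force simp: C_def)
  then show "1 \<le> sm_cutoff n k g L"
    unfolding cutoff using Min_in[OF fin] by (auto simp: C_def)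
  show "sm_cutoff n k g L \<le> Suc k"
    "\<And>s l \<gamma>. ((s,l),\<gamma>) \<in> set L \<Longrightarrow> k < l \<Longrightarrow> sm_cutoff n k g L \<le> s"
    "\<And>j. j \<in> {1..n} \<Longrightarrow> 0 < g j \<Longrightarrow> sm_cutoff n k g L \<le> j"
    unfolding cutoff using Min_le[OF fin] by (auto simp: C_def)
qed

lemma sm_cutoff_cases:
  assumes valid: "valid_pairs n L"
  obtains (prefix_end) "sm_cutoff n k g L = Suc k"
    | (leaving_pair) l \<gamma> where "((sm_cutoff n k g L, l), \<gamma>) \<in> set L" "k < l"
    | (unsplit) "sm_cutoff n k g L \<in> {1..n}" "0 < g (sm_cutoff n k g L)"
proof -
  define C where "C = insert (Suc k) ({s. \<exists>l \<gamma>. ((s,l),\<gamma>) \<in> set L \<and> k < l} \<union> {j\<in>{1..n}. 0 < g j})"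
  have "{s. \<exists>l \<gamma>. ((s,l),\<gamma>) \<in> set L \<and> k < l} \<subseteq> {1..n}"
    using valid_pairsD(1)[OF valid] by blast
  then have "finite C" unfolding C_def by (auto intro: finite_subset)
  then have "sm_cutoff n k g L \<in> C" unfolding sm_cutoff_def C_def[symmetric] by (rule Min_in) (simp add: C_def)
  then show ?thesis using that unfolding C_def by blast
qed

lemma sm_cutoff_sources_exhausted:
  assumes inv: "sm_inv n v f (g, t, L)" and k: "k \<le> n" and j: "1 \<le> j" "j < sm_cutoff n k g L"
  shows "f j / 2 = source_use_upto v k L j"
proof -
  have valid: "valid_pairs n L" using inv by simp
  have "j \<in> {1..n}" using j k sm_cutoff_bounds(2)[OF valid, where k = k and g = g] by auto
  then have "g j = 0" using inv j sm_cutoff_bounds(4)[OF valid, where k = k and g = g] by force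
  moreover have "source_use_upto v k L j = source_use v L j"
    using j sm_cutoff_bounds(3)[OF valid] by (intro source_use_upto_eq) (meson not_le)
  ultimately show ?thesis using inv by simp
qed

lemma sm_cutoff_targets_exhausted:
  assumes inv: "sm_inv n v f (g, t, L)" and stop: "\<not> sm_cont n (g, t, L)"
    and k: "k \<le> n" and j: "sm_cutoff n k g L < j" "j \<le> k"
  shows "f j / 2 = target_use v L j"
proof -
  have valid: "valid_pairs n L" using inv by simp
  have "t j = 0"
    using valid
  proof (cases rule: sm_cutoff_cases[where k = k and g = g])
    case prefix_end
    then show ?thesis using j by simp
  next
    case (leaving_pair l \<gamma>)
    then show ?thesis using inv j by (force simp: targets_exhausted_between_def)
  next
    case unsplit
    then have "sm_s n g = sm_cutoff n k g L"
      unfolding sm_s_def using sm_cutoff_bounds(4)[OF valid] by (intro Least_equality) auto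
    then have "\<not> 0 < t j" using stop unsplit j k by (auto simp: sm_cont_def)
    moreover have "0 \<le> t j" using inv j k sm_cutoff_bounds(1)[OF valid, where k = k and g = g] by auto
    ultimately show ?thesis by simp
  qed
  then show ?thesis using inv by simp
qed

lemma sm_cutoff_low_sources:
  assumes inv: "sm_inv n v f (g, t, L)"
    and sl: "((s,l),\<gamma>) \<in> set L" "sm_cutoff n k g L < l" "l \<le> k"
  shows "s \<le> sm_cutoff n k g L"
proof (rule ccontr)
  have valid: "valid_pairs n L" using inv by simp
  assume "\<not> s \<le> sm_cutoff n k g L"
  then have above: "sm_cutoff n k g L < s" by simp
  show False
    using valid
  proof (cases rule: sm_cutoff_cases[where k = k and g = g])
    case prefix_end
    then show ?thesis using sl by simp
  next
    case (leaving_pair l0 \<gamma>0)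
    then have "l0 \<le> l" using inv sl(1) above unfolding sm_inv.simps pairs_monotone_def by blast
    then show ?thesis using leaving_pair sl by simp
  next
    case unsplit
    have "sources_exhausted_below g L" using inv by simp
    then have "\<forall>i. 1 \<le> i \<longrightarrow> i < s \<longrightarrow> g i = 0"
      using sl(1) unfolding sources_exhausted_below_def by blast
    then have "g (sm_cutoff n k g L) = 0" using above unsplit by simp
    then show ?thesis using unsplit by simp
  qed
qed

context increasing_values
begin

lemma sm_step_explicit:
  assumes inv: "sm_inv n v f (g, t, L)" and cont: "sm_cont n (g, t, L)"
  obtains s l \<gamma> where "s \<in> {1..n}" "0 < g s" "\<And>i. 1 \<le> i \<Longrightarrow> i < s \<Longrightarrow> g i = 0"
    and "s < l" "l \<le> n" "0 < t l" "\<And>j. s < j \<Longrightarrow> j < l \<Longrightarrow> t j = 0"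
    and "0 < v s / v l" "v s / v l < 1" "0 \<le> \<gamma>"
    and "\<gamma> * (1 - v s / v l) \<le> g s" "\<gamma> * (v s / v l) \<le> t l"
    and "\<gamma> * (1 - v s / v l) = g s \<or> \<gamma> * (v s / v l) = t l"
    and "sm_step n v (g, t, L) = (g(s := g s - \<gamma> * (1 - v s / v l)),
           t(l := t l - \<gamma> * (v s / v l)), L @ [((s,l),\<gamma>)])"
proof -
  have nonneg: "\<forall>i\<in>{1..n}. 0 \<le> g i" "\<forall>i\<in>{1..n}. 0 \<le> t i" using inv by auto
  define s where "s = sm_s n g"
  define l where "l = sm_l n s t"
  have ex_s: "\<exists>s. 1 \<le> s \<and> s \<le> n \<and> 0 < g s" and ex_l: "\<exists>l. s < l \<and> l \<le> n \<and> 0 < t l"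
    using cont by (auto simp: sm_cont_def s_def)
  note s = sm_s_least[OF nonneg(1) ex_s, folded s_def]
  note l = sm_l_least[OF nonneg(2) ex_l, folded l_def]
  define r where "r = v s / v l"
  have r: "0 < r" "r < 1"
    using s l v_gt_0[of s] v_less_iff[of s l] by (auto simp: r_def)
  define \<gamma> where "\<gamma> = min (g s / (1 - r)) (t l / r)"
  show ?thesis
  proof (rule that[of s l \<gamma>, folded r_def])
    show "0 \<le> \<gamma>" "\<gamma> * (1 - r) \<le> g s" "\<gamma> * r \<le> t l"
      using r s(2) l(3) by (auto simp: \<gamma>_def min_def field_simps)
    show "\<gamma> * (1 - r) = g s \<or> \<gamma> * r = t l"
      using r by (auto simp: \<gamma>_def min_def)
    show "sm_step n v (g, t, L) = (g(s := g s - \<gamma> * (1 - r)), t(l := t l - \<gamma> * r), L @ [((s,l),\<gamma>)])"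
      by (simp add: sm_step_def Let_def s_def l_def r_def \<gamma>_def)
  qed (use s l r in auto)
qed

lemma sm_inv_step:
  assumes inv: "sm_inv n v f (g, t, L)" and cont: "sm_cont n (g, t, L)"
  shows "sm_inv n v f (sm_step n v (g, t, L))"
proof -
  obtain s l \<gamma> where s: "s \<in> {1..n}" "0 < g s" "\<And>i. 1 \<le> i \<Longrightarrow> i < s \<Longrightarrow> g i = 0"
    and l: "s < l" "l \<le> n" "0 < t l" "\<And>j. s < j \<Longrightarrow> j < l \<Longrightarrow> t j = 0"
    and \<gamma>: "0 \<le> \<gamma>" "\<gamma> * (1 - v s / v l) \<le> g s" "\<gamma> * (v s / v l) \<le> t l"
    and step: "sm_step n v (g, t, L) = (g(s := g s - \<gamma> * (1 - v s / v l)),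
           t(l := t l - \<gamma> * (v s / v l)), L @ [((s,l),\<gamma>)])"
    by (rule sm_step_explicit[OF inv cont]) (rule that; assumption)
  show ?thesis
    unfolding step sm_inv.simps
  proof (intro conjI)
    show "\<forall>i\<in>{1..n}. 0 \<le> (g(s := g s - \<gamma> * (1 - v s / v l))) i \<and> 0 \<le> (t(l := t l - \<gamma> * (v s / v l))) i"
      using inv \<gamma> by auto
    show "\<forall>i. (g(s := g s - \<gamma> * (1 - v s / v l))) i = f i / 2 - source_use v (L @ [((s,l),\<gamma>)]) i"
      "\<forall>i. (t(l := t l - \<gamma> * (v s / v l))) i = f i / 2 - target_use v (L @ [((s,l),\<gamma>)]) i"
      using inv by (auto simp: source_use_def target_use_def)
    show "valid_pairs n (L @ [((s,l),\<gamma>)])"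
      using inv s l \<gamma> by (auto simp: valid_pairs_def)
    show "sources_exhausted_below (g(s := g s - \<gamma> * (1 - v s / v l))) (L @ [((s,l),\<gamma>)])"
      using inv s by (intro sources_exhausted_below_snoc) auto
    show "targets_exhausted_between (t(l := t l - \<gamma> * (v s / v l))) (L @ [((s,l),\<gamma>)])"
      using inv l by (intro targets_exhausted_between_snoc) auto
    show "pairs_monotone (L @ [((s,l),\<gamma>)])"
      using inv s l by (intro pairs_monotone_snoc[where g = g and t = t]) auto
  qed
qed

lemma sm_measure_step:
  assumes inv: "sm_inv n v f (g, t, L)" and cont: "sm_cont n (g, t, L)"
  shows "sm_measure n (sm_step n v (g, t, L)) < sm_measure n (g, t, L)"
proof -
  obtain s l \<gamma> where s: "s \<in> {1..n}" "0 < g s" and l: "s < l" "l \<le> n" "0 < t l"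
    and r: "0 < v s / v l" "v s / v l < 1" and "0 \<le> \<gamma>"
    and exhausts: "\<gamma> * (1 - v s / v l) = g s \<or> \<gamma> * (v s / v l) = t l"
    and step: "sm_step n v (g, t, L) = (g(s := g s - \<gamma> * (1 - v s / v l)),
           t(l := t l - \<gamma> * (v s / v l)), L @ [((s,l),\<gamma>)])"
    by (rule sm_step_explicit[OF inv cont]) (rule that; assumption)
  have "0 \<le> \<gamma> * (1 - v s / v l)" "0 \<le> \<gamma> * (v s / v l)"
    using \<open>0 \<le> \<gamma>\<close> r by (intro mult_nonneg_nonneg; simp)+
  note dg = card_positive_update[OF this(1), where g = g and s = s and n = n]
    and dt = card_positive_update[OF this(2), where g = t and s = l and n = n]
  have "l \<in> {1..n}" using s l by auto
  then have "card {i\<in>{1..n}. 0 < (g(s := g s - \<gamma> * (1 - v s / v l))) i} < card {i\<in>{1..n}. 0 < g i}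
      \<or> card {i\<in>{1..n}. 0 < (t(l := t l - \<gamma> * (v s / v l))) i} < card {i\<in>{1..n}. 0 < t i}"
    using exhausts dg(2) dt(2) s l(3) by blast
  then show ?thesis using dg(1) dt(1) unfolding step sm_measure.simps by linarith
qed

lemma source_value_le_binary_prefix_surplus:
  assumes valid: "valid_pairs n L" and A: "finite A"
  shows "(\<Sum>j\<in>A. v j * source_use_upto v k L j) \<le> binary_prefix_surplus v k L"
proof -
  have "(\<Sum>j\<in>A. v j * source_use_upto v k L j)
      = sum_list (map (\<lambda>((s,l),\<gamma>). \<Sum>j\<in>A. v j * (if s = j \<and> l \<le> k then \<gamma> * (1 - v s / v l) else 0)) L)"
    unfolding source_use_upto_def sum_list_const_mult[symmetric] sum_sum_list_swap
    by (simp only: split_def)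
  also have "\<dots> \<le> binary_prefix_surplus v k L"
    unfolding binary_prefix_surplus_def
  proof (rule sum_list_mono, clarify)
    fix s l \<gamma> assume "((s,l),\<gamma>) \<in> set L"
    note sl = valid_pairsD[OF valid this]
    then have v: "0 < v s" "v s < v l" using v_gt_0 v_less_iff by auto
    have "(\<Sum>j\<in>A. v j * (if s = j \<and> l \<le> k then \<gamma> * (1 - v s / v l) else 0))
        = (if s \<in> A \<and> l \<le> k then \<gamma> * (v s / v l) * (v l - v s) else 0)"
    proof -
      have "v j * (if s = j \<and> l \<le> k then \<gamma> * (1 - v s / v l) else 0)
          = (if j = s then (if l \<le> k then \<gamma> * (v s / v l) * (v l - v s) else 0) else 0)" for j
        using v by (simp add: field_simps)
      then show ?thesis using A by (simp add: sum.delta)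
    qed
    also have "\<dots> \<le> (if l \<le> k then \<gamma> * (v s / v l) * (v l - v s) else 0)"
      using v sl by simp
    finally show "(\<Sum>j\<in>A. v j * (if s = j \<and> l \<le> k then \<gamma> * (1 - v s / v l) else 0))
        \<le> (if l \<le> k then \<gamma> * (v s / v l) * (v l - v s) else 0)" .
  qed
  finally show ?thesis .
qed

lemma target_gain_le_binary_prefix_surplus:
  assumes valid: "valid_pairs n L" and i0: "1 \<le> i0"
    and low_source: "\<And>s l \<gamma>. ((s,l),\<gamma>) \<in> set L \<Longrightarrow> i0 < l \<Longrightarrow> l \<le> k \<Longrightarrow> s \<le> i0"
  shows "(\<Sum>j\<in>{i0<..k}. (v j - v i0) * target_use v L j) \<le> binary_prefix_surplus v k L"
proof -
  have "(\<Sum>j\<in>{i0<..k}. (v j - v i0) * target_use v L j)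
      = sum_list (map (\<lambda>((s,l),\<gamma>). \<Sum>j\<in>{i0<..k}. (v j - v i0) * (if l = j then \<gamma> * (v s / v l) else 0)) L)"
    unfolding target_use_def sum_list_const_mult[symmetric] sum_sum_list_swap
    by (simp only: split_def)
  also have "\<dots> \<le> binary_prefix_surplus v k L"
    unfolding binary_prefix_surplus_def
  proof (rule sum_list_mono, clarify)
    fix s l \<gamma> assume sl_in: "((s,l),\<gamma>) \<in> set L"
    note sl = valid_pairsD[OF valid this]
    then have v: "0 < v s" "v s < v l" using v_gt_0 v_less_iff by auto
    have "(\<Sum>j\<in>{i0<..k}. (v j - v i0) * (if l = j then \<gamma> * (v s / v l) else 0))
        = (if l \<in> {i0<..k} then \<gamma> * (v s / v l) * (v l - v i0) else 0)"
    proof -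
      have "(v j - v i0) * (if l = j then \<gamma> * (v s / v l) else 0)
          = (if j = l then \<gamma> * (v s / v l) * (v l - v i0) else 0)" for j
        by simp
      then show ?thesis by (simp add: sum.delta)
    qed
    also have "\<dots> \<le> (if l \<le> k then \<gamma> * (v s / v l) * (v l - v s) else 0)"
    proof (cases "l \<in> {i0<..k}")
      case True
      then have "v s \<le> v i0"
        using low_source[OF sl_in] sl i0 v_le_iff[of s i0] by auto
      moreover have "0 \<le> \<gamma> * (v s / v l)" using v sl by simp
      ultimately have "\<gamma> * (v s / v l) * (v l - v i0) \<le> \<gamma> * (v s / v l) * (v l - v s)"
        by (intro mult_left_mono) auto
      then show ?thesis using True by simp
    qed (use v sl in simp)
    finally show "(\<Sum>j\<in>{i0<..k}. (v j - v i0) * (if l = j then \<gamma> * (v s / v l) else 0))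
        \<le> (if l \<le> k then \<gamma> * (v s / v l) * (v l - v s) else 0)" .
  qed
  finally show ?thesis .
qed

end

context values_prior
begin

lemma sm_inv_init: "sm_inv n v f (\<lambda>i. f i / 2, \<lambda>i. f i / 2, [])"
  using f_pos by (auto simp: source_use_def target_use_def valid_pairs_def less_imp_le
      sources_exhausted_below_def targets_exhausted_between_def pairs_monotone_def)

lemma split_and_match_final:
  obtains g t where "sm_inv n v f (g, t, split_and_match_binary n v f)"
    and "\<not> sm_cont n (g, t, split_and_match_binary n v f)"
proof -
  have step: "sm_inv n v f (sm_step n v st) \<and> sm_measure n (sm_step n v st) < sm_measure n st"
    if "sm_inv n v f st" "sm_cont n st" for st
    using that sm_inv_step sm_measure_step by (cases st) auto
  obtain st where st: "while_option (sm_cont n) (sm_step n v) (\<lambda>i. f i / 2, \<lambda>i. f i / 2, []) = Some st"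
    using measure_while_option_Some[of "sm_inv n v f", OF step sm_inv_init] by blast
  obtain g t L where st_eq: "st = (g, t, L)" by (cases st)
  have "sm_inv n v f st"
    by (rule while_option_rule[where P = "sm_inv n v f", OF _ st sm_inv_init]) (use step in blast)
  moreover have "\<not> sm_cont n st" using while_option_stop[OF st] .
  moreover have "split_and_match_binary n v f = L"
    unfolding split_and_match_binary_def st st_eq by simp
  ultimately show ?thesis using that st_eq by blast
qed

lemma prefix_surplus_le_four_split_and_match:
  assumes Z: "is_scheme n f Z" and k: "k \<le> n"
  shows "prefix_surplus n v f Z k \<le> 4 * prefix_surplus n v f (split_and_match n v f) k"
proof -
  define L where "L = split_and_match_binary n v f"
  obtain g t where inv: "sm_inv n v f (g, t, L)" and stop: "\<not> sm_cont n (g, t, L)"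
    using split_and_match_final unfolding L_def by blast
  have valid: "valid_pairs n L" using inv by simp
  define i0 where "i0 = sm_cutoff n k g L"
  have i0: "1 \<le> i0" "i0 \<le> Suc k" using sm_cutoff_bounds[OF valid] by (simp_all add: i0_def)
  have sources: "\<And>j. 1 \<le> j \<Longrightarrow> j < i0 \<Longrightarrow> f j / 2 = source_use_upto v k L j"
    and targets: "\<And>j. i0 < j \<Longrightarrow> j \<le> k \<Longrightarrow> f j / 2 = target_use v L j"
    and low_source: "\<And>s l \<gamma>. ((s,l),\<gamma>) \<in> set L \<Longrightarrow> i0 < l \<Longrightarrow> l \<le> k \<Longrightarrow> s \<le> i0"
    unfolding i0_def using sm_cutoff_sources_exhausted[OF inv k] sm_cutoff_targets_exhausted[OF inv stop k]
      sm_cutoff_low_sources[OF inv] by auto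
  have "prefix_surplus n v f Z k \<le> (\<Sum>j=1..k. f j * v j) - v i0 * (\<Sum>j=i0..k. f j)"
    using scheme_prefix_surplus_le[OF Z k i0] .
  also have "\<dots> = (\<Sum>j\<in>{1..<i0}. f j * v j) + (\<Sum>j\<in>{i0<..k}. f j * (v j - v i0))"
    using sum_minus_tail_split[OF i0] .
  also have "\<dots> = 2 * (\<Sum>j\<in>{1..<i0}. v j * source_use_upto v k L j)
      + 2 * (\<Sum>j\<in>{i0<..k}. (v j - v i0) * target_use v L j)"
    using sources targets by (simp add: sum_distrib_left mult_ac)
  also have "\<dots> \<le> 4 * binary_prefix_surplus v k L"
  proof -
    have "(\<Sum>j\<in>{i0<..k}. (v j - v i0) * target_use v L j) \<le> binary_prefix_surplus v k L"
      by (rule target_gain_le_binary_prefix_surplus[OF valid i0(1)], rule low_source)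
    then show ?thesis using source_value_le_binary_prefix_surplus[OF valid, of "{1..<i0}" k] by simp
  qed
  also have "\<dots> = 4 * prefix_surplus n v f (split_and_match n v f) k"
    using split_and_match_prefix_surplus valid k by (simp add: L_def)
  finally show ?thesis .
qed

section \<open>Integrating the surplus-mass function\<close>

lemma cdf_mono: "i \<le> j \<Longrightarrow> j \<le> n \<Longrightarrow> cdf f i \<le> cdf f j"
  unfolding cdf_def using f_pos by (intro sum_mono2) (auto intro: less_imp_le)

lemma integral_surplus_mass:
  assumes "0 \<le> m"
  shows "integral {0..m} (surplus_mass n v f Z)
       = (\<Sum>i=1..n. cs_scheme n v f Z i * (min m (cdf f i) - min m (cdf f (i - 1))))"
proof -
  have "(surplus_mass n v f Z has_integral
      (\<Sum>i=1..n. cs_scheme n v f Z i * (min m (cdf f i) - min m (cdf f (i - 1))))) {0..m}"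
    unfolding surplus_mass_def[abs_def]
  proof (rule has_integral_sum)
    fix i assume "i \<in> {1..n}"
    then have "0 \<le> cdf f (i - 1)" "cdf f (i - 1) \<le> cdf f i"
      using cdf_mono[of 0 "i - 1"] cdf_mono[of "i - 1" i] by (auto simp: cdf_def)
    then show "((\<lambda>x. if cdf f (i - 1) < x \<and> x \<le> cdf f i then cs_scheme n v f Z i else 0)
        has_integral (cs_scheme n v f Z i * (min m (cdf f i) - min m (cdf f (i - 1))))) {0..m}"
      using assms by (rule has_integral_Ioc_const)
  qed simp
  then show ?thesis by (rule integral_unique)
qed

lemma integral_surplus_mass_cell:
  assumes k: "1 \<le> k" "k \<le> n" and m: "cdf f (k - 1) < m" "m \<le> cdf f k"
  shows "integral {0..m} (surplus_mass n v f Z)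
       = prefix_surplus n v f Z (k - 1) + (m - cdf f (k - 1)) * cs_scheme n v f Z k"
proof -
  define c where "c = cs_scheme n v f Z"
  define w where "w i = min m (cdf f i) - min m (cdf f (i - 1))" for i
  have "cdf f 0 \<le> cdf f (k - 1)" using k by (intro cdf_mono) auto
  then have "0 \<le> m" using m by (simp add: cdf_def)
  have "w i = f i" if "i \<in> {1..k-1}" for i
  proof -
    have "cdf f i \<le> cdf f (k - 1)" using that k by (intro cdf_mono) auto
    moreover have "0 < f i" using that k by (intro f_pos) auto
    ultimately show ?thesis using that m cdf_step[of i] by (simp add: w_def)
  qed
  moreover have "w i = 0" if "i \<in> {Suc k..n}" for i
  proof -
    have "cdf f k \<le> cdf f (i - 1)" "cdf f k \<le> cdf f i"
      using that cdf_mono[of k "i - 1"] cdf_mono[of k i] by auto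
    then show ?thesis using m by (simp add: w_def)
  qed
  moreover have "w k = m - cdf f (k - 1)" using m by (simp add: w_def)
  moreover have "(\<Sum>i=1..n. c i * w i) = c k * w k + ((\<Sum>i=1..k-1. c i * w i) + (\<Sum>i=Suc k..n. c i * w i))"
  proof -
    have cells: "{1..n} = insert k ({1..k-1} \<union> {Suc k..n})" using k by auto
    have "(\<Sum>i=1..n. c i * w i) = c k * w k + (\<Sum>i\<in>{1..k-1} \<union> {Suc k..n}. c i * w i)"
      unfolding cells by (rule sum.insert) auto
    also have "(\<Sum>i\<in>{1..k-1} \<union> {Suc k..n}. c i * w i) = (\<Sum>i=1..k-1. c i * w i) + (\<Sum>i=Suc k..n. c i * w i)"
      by (rule sum.union_disjoint) auto
    finally show ?thesis .
  qed
  ultimately have "(\<Sum>i=1..n. c i * w i) = (\<Sum>i=1..k-1. f i * c i) + (m - cdf f (k - 1)) * c k"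
    by (simp add: mult.commute)
  then show ?thesis
    using integral_surplus_mass[OF \<open>0 \<le> m\<close>] by (simp add: prefix_surplus_def c_def w_def)
qed

lemma integral_surplus_mass_interpolates:
  assumes f_sum: "(\<Sum>i=1..n. f i) = 1" and m: "0 < m" "m \<le> 1"
  obtains k \<theta> where "k \<le> n" "0 \<le> \<theta>" "\<theta> \<le> 1"
    and "\<And>Z. integral {0..m} (surplus_mass n v f Z)
           = (1 - \<theta>) * prefix_surplus n v f Z (k - 1) + \<theta> * prefix_surplus n v f Z k"
proof -
  have "m \<le> cdf f n" using f_sum m by (simp add: cdf_def)
  define k where "k = (LEAST k. m \<le> cdf f k)"
  have mk: "m \<le> cdf f k" "k \<le> n"
    using LeastI[of "\<lambda>k. m \<le> cdf f k", OF \<open>m \<le> cdf f n\<close>] Least_le[of "\<lambda>k. m \<le> cdf f k", OF \<open>m \<le> cdf f n\<close>]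
    by (simp_all add: k_def)
  have k1: "1 \<le> k" using mk m by (cases k) (simp_all add: cdf_def)
  have mk1: "cdf f (k - 1) < m"
    using not_less_Least[of "k - 1" "\<lambda>k. m \<le> cdf f k"] k1 by (simp add: k_def)
  have fk: "0 < f k" "cdf f k = cdf f (k - 1) + f k" using f_pos k1 mk(2) cdf_step[of k] by auto
  define \<theta> where "\<theta> = (m - cdf f (k - 1)) / f k"
  have step: "prefix_surplus n v f Z k = prefix_surplus n v f Z (k - 1) + f k * cs_scheme n v f Z k" for Z
    using k1 by (cases k) (simp_all add: prefix_surplus_def)
  show ?thesis
  proof (rule that[of k \<theta>])
    show "k \<le> n" "0 \<le> \<theta>" "\<theta> \<le> 1" using mk mk1 fk by (simp_all add: \<theta>_def field_simps)
    show "integral {0..m} (surplus_mass n v f Z)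
        = (1 - \<theta>) * prefix_surplus n v f Z (k - 1) + \<theta> * prefix_surplus n v f Z k" for Z
      unfolding integral_surplus_mass_cell[OF k1 mk(2) mk1 mk(1)] step
      using fk by (simp add: \<theta>_def field_simps)
  qed
qed

end

theorem lemma1:
  fixes n :: nat and v :: "nat \<Rightarrow> real" and f :: "nat \<Rightarrow> real"
    and Z' :: scheme and m :: real
  assumes v_pos: "0 < v 1"
    and v_mono: "strict_mono_on {1..n} v"
    and f_pos: "\<And>i. i \<in> {1..n} \<Longrightarrow> 0 < f i"
    and f_sum: "(\<Sum>i=1..n. f i) = 1"
    and Z': "is_scheme n f Z'"
    and m: "0 < m" "m \<le> 1"
  shows "4 * integral {0..m} (surplus_mass n v f (split_and_match n v f))
           \<ge> integral {0..m} (surplus_mass n v f Z')"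
proof -
  interpret values_prior n v f
    using v_pos v_mono f_pos by unfold_locales
  define Z0 where "Z0 = split_and_match n v f"
  obtain k \<theta> where k: "k \<le> n" and \<theta>: "0 \<le> \<theta>" "\<theta> \<le> 1"
    and integral: "\<And>Z. integral {0..m} (surplus_mass n v f Z)
      = (1 - \<theta>) * prefix_surplus n v f Z (k - 1) + \<theta> * prefix_surplus n v f Z k"
    using integral_surplus_mass_interpolates[OF f_sum m] by blast
  have "prefix_surplus n v f Z' j \<le> 4 * prefix_surplus n v f Z0 j" if "j \<le> n" for j
    unfolding Z0_def using prefix_surplus_le_four_split_and_match[OF Z' that] .
  then have "(1 - \<theta>) * prefix_surplus n v f Z' (k - 1) \<le> (1 - \<theta>) * (4 * prefix_surplus n v f Z0 (k - 1))"
    and "\<theta> * prefix_surplus n v f Z' k \<le> \<theta> * (4 * prefix_surplus n v f Z0 k)"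
    using k \<theta> by (simp_all add: mult_left_mono)
  then show ?thesis unfolding Z0_def[symmetric] integral by (simp add: algebra_simps)
qed

end
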